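(* Let $p$ be a prime, $\mathcal{V}=\mathbb{F}_p^n$, and let $\mathcal{V}$ act on $\mathbb{Z}^{\mathcal{V}}$ by $u\cdot e_v=e_{u+v}$ (translation of the standard basis). Let $x=\sum_{v\in\mathcal{V}}x_ve_v\in\mathbb{Z}^{\mathcal{V}}$ and assume either $p$ is odd or $\sum_{v\in\mathcal{V}}x_v$ is divisible by $4$. If the stabilizer $\operatorname{Stab}_{\mathcal{V}}(x)$ is nontrivial, then $\sum_{v\in\mathcal{V}}x_v v=0$ in $\mathcal{V}$. In particular, if $\sum_v x_v=0$ and $\sum_v x_vv\neq0$, then $\operatorname{Stab}_{\mathcal{V}}(x)=\{0\}$.
   Context: $\mathbb{Z}^{\mathcal{V}}$ is the free abelian group with standard basis $\{e_v\}_{v\in\mathcal{V}}$; in $\sum_v x_vv$ the integers $x_v$ act on $\mathcal{V}$ via reduction mod $p$. *)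

theory Defs
  imports "HOL-Computational_Algebra.Primes"
begin

text \<open>The vector space V = F_p^n is modelled by the explicit carrier of
  coordinate functions nat => int with coordinates i < n in {0..p-1}
  and coordinates i >= n equal to 0; addition is coordinatewise mod p.\<close>

definition Fpn :: "nat \<Rightarrow> nat \<Rightarrow> (nat \<Rightarrow> int) set" where
  "Fpn p n = {v. (\<forall>i<n. 0 \<le> v i \<and> v i < int p) \<and> (\<forall>i\<ge>n. v i = 0)}"

definition vzero :: "nat \<Rightarrow> int" where
  "vzero = (\<lambda>i. 0)"

definition vadd :: "nat \<Rightarrow> (nat \<Rightarrow> int) \<Rightarrow> (nat \<Rightarrow> int) \<Rightarrow> (nat \<Rightarrow> int)" where
  "vadd p u v = (\<lambda>i. (u i + v i) mod int p)"

text \<open>An element x = sum_v x_v e_v of Z^V is given by its coefficient function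
  (only values on Fpn p n matter). Translation: u . x = sum_v x_v e_(u+v);
  so u . x = x iff x_(u+v) = x_v for all v.\<close>

definition translate :: "nat \<Rightarrow> nat \<Rightarrow> (nat \<Rightarrow> int) \<Rightarrow> ((nat \<Rightarrow> int) \<Rightarrow> int) \<Rightarrow> ((nat \<Rightarrow> int) \<Rightarrow> int)" where
  "translate p n u x = (\<lambda>w. if w \<in> Fpn p n then (\<Sum>v\<in>{v\<in>Fpn p n. vadd p u v = w}. x v) else 0)"

definition Stab :: "nat \<Rightarrow> nat \<Rightarrow> ((nat \<Rightarrow> int) \<Rightarrow> int) \<Rightarrow> (nat \<Rightarrow> int) set" where
  "Stab p n x = {u \<in> Fpn p n. \<forall>w\<in>Fpn p n. translate p n u x w = x w}"

definition wsum :: "nat \<Rightarrow> nat \<Rightarrow> ((nat \<Rightarrow> int) \<Rightarrow> int) \<Rightarrow> (nat \<Rightarrow> int)" where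
  "wsum p n x = (\<lambda>i. (\<Sum>v\<in>Fpn p n. x v * v i) mod int p)"

end

theory Submission
  imports Defs "HOL-Number_Theory.Cong"
begin

text \<open>Let \<open>u \<noteq> 0\<close> stabilise \<open>x\<close> and choose \<open>j\<close> with \<open>u\<^sub>j \<noteq> 0\<close>. Every vector is uniquely
  \<open>t + k u\<close> with \<open>t\<^sub>j = 0\<close> and \<open>0 \<le> k < p\<close>, and \<open>x\<close> is constant along each such line.
  Summing line by line, with \<open>X\<close> the sum of \<open>x\<close> over the hyperplane \<open>t\<^sub>j = 0\<close>, gives
  \<open>\<Sum>\<^sub>v x\<^sub>v = p X\<close> and \<open>\<Sum>\<^sub>v x\<^sub>v v = X (0 + 1 + \<dots> + (p - 1)) u\<close> in \<open>V\<close>.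
  For odd \<open>p\<close> the triangular number \<open>p (p - 1) / 2\<close> vanishes mod \<open>p\<close>;
  for \<open>p = 2\<close>, \<open>4 dvd 2 X\<close> makes \<open>X\<close> even.\<close>

lemma Fpn_coord_mod: "v \<in> Fpn p n \<Longrightarrow> p > 0 \<Longrightarrow> v i mod int p = v i"
  unfolding Fpn_def by (cases "i < n") auto

lemma Fpn_coord_nonzero_imp_less: "v \<in> Fpn p n \<Longrightarrow> v i \<noteq> 0 \<Longrightarrow> i < n"
  unfolding Fpn_def using not_le by blast

lemma Fpn_coord_coprime:
  assumes "prime p" "v \<in> Fpn p n" "v i \<noteq> 0"
  shows "coprime (v i) (int p)"
proof -
  have "0 < v i" "v i < int p"
    using assms(2,3) Fpn_coord_nonzero_imp_less[OF assms(2,3)] unfolding Fpn_def by force+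
  then have "\<not> int p dvd v i"
    using zdvd_not_zless by blast
  moreover have "prime (int p)"
    using assms(1) by simp
  ultimately show ?thesis
    using prime_imp_coprime coprime_commute by blast
qed

lemma vadd_in_Fpn: "p > 0 \<Longrightarrow> u \<in> Fpn p n \<Longrightarrow> v \<in> Fpn p n \<Longrightarrow> vadd p u v \<in> Fpn p n"
  unfolding Fpn_def vadd_def by auto

lemma inj_on_vadd:
  assumes "p > 0"
  shows "inj_on (vadd p u) (Fpn p n)"
proof (rule inj_onI, rule ext)
  fix v v' i
  assume v: "v \<in> Fpn p n" and v': "v' \<in> Fpn p n" and eq: "vadd p u v = vadd p u v'"
  have "[u i + v i = u i + v' i] (mod int p)"
    using fun_cong[OF eq, of i] by (simp add: vadd_def cong_def)
  then have "[v i = v' i] (mod int p)"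
    by (simp only: cong_add_lcancel)
  then show "v i = v' i"
    using Fpn_coord_mod[OF v assms] Fpn_coord_mod[OF v' assms] by (simp add: cong_def)
qed

lemma translate_vadd:
  assumes "p > 0" "u \<in> Fpn p n" "v \<in> Fpn p n"
  shows "translate p n u x (vadd p u v) = x v"
proof -
  have "{v' \<in> Fpn p n. vadd p u v' = vadd p u v} = {v}"
    using inj_on_vadd[OF assms(1)] assms(3) by (auto dest: inj_onD)
  then show ?thesis
    using vadd_in_Fpn[OF assms] by (simp add: translate_def)
qed

lemma Stab_periodic: "p > 0 \<Longrightarrow> u \<in> Stab p n x \<Longrightarrow> v \<in> Fpn p n \<Longrightarrow> x (vadd p u v) = x v"
  using translate_vadd[of p u n v x] vadd_in_Fpn[of p u n v] unfolding Stab_def by auto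

lemma vzero_in_Stab:
  assumes "p > 0"
  shows "vzero \<in> Stab p n x"
proof -
  have vzero: "vzero \<in> Fpn p n"
    using assms by (simp add: Fpn_def vzero_def)
  have "translate p n vzero x v = x v" if v: "v \<in> Fpn p n" for v
  proof -
    have "vadd p vzero v = v"
      using Fpn_coord_mod[OF v assms] by (simp add: vadd_def vzero_def)
    then show ?thesis
      using translate_vadd[OF assms vzero v, of x] by simp
  qed
  with vzero show ?thesis
    unfolding Stab_def by blast
qed

definition line_point :: "nat \<Rightarrow> (nat \<Rightarrow> int) \<Rightarrow> (nat \<Rightarrow> int) \<Rightarrow> nat \<Rightarrow> (nat \<Rightarrow> int)" where
  "line_point p u t k = (\<lambda>i. (t i + int k * u i) mod int p)"

lemma line_point_in_Fpn: "p > 0 \<Longrightarrow> u \<in> Fpn p n \<Longrightarrow> t \<in> Fpn p n \<Longrightarrow> line_point p u t k \<in> Fpn p n"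
  unfolding Fpn_def line_point_def by auto

lemma line_point_eq_vadd: "line_point p u t k = vadd p (\<lambda>i. int k * u i) t"
  unfolding line_point_def vadd_def by (simp add: add.commute)

lemma line_point_0: "p > 0 \<Longrightarrow> t \<in> Fpn p n \<Longrightarrow> line_point p u t 0 = t"
  using Fpn_coord_mod by (auto simp: line_point_def)

lemma line_point_Suc: "line_point p u t (Suc k) = vadd p u (line_point p u t k)"
  unfolding line_point_def vadd_def by (auto simp: mod_simps algebra_simps)

lemma Stab_line_point:
  assumes "p > 0" "u \<in> Stab p n x" "t \<in> Fpn p n"
  shows "x (line_point p u t k) = x t"
proof (induction k)
  case 0
  show ?case using line_point_0[OF assms(1,3)] by simp
next
  case (Suc k)
  have "u \<in> Fpn p n"
    using assms(2) by (simp add: Stab_def)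
  then show ?case
    using Suc Stab_periodic[OF assms(1,2) line_point_in_Fpn[OF assms(1) _ assms(3)]]
    by (simp add: line_point_Suc)
qed

lemma inj_on_line_point:
  assumes "prime p" "u \<in> Fpn p n" "u j \<noteq> 0"
  shows "inj_on (\<lambda>(t, k). line_point p u t k) ({t \<in> Fpn p n. t j = 0} \<times> {..<p})"
proof (rule inj_onI, clarify)
  fix t k t' k'
  assume t: "t \<in> Fpn p n" "t j = 0" "k < p" and t': "t' \<in> Fpn p n" "t' j = 0" "k' < p"
    and eq: "line_point p u t k = line_point p u t' k'"
  have "[int k * u j = int k' * u j] (mod int p)"
    using fun_cong[OF eq, of j] t t' by (simp add: line_point_def cong_def)
  then have "[int k = int k'] (mod int p)"
    using cong_mult_rcancel[OF Fpn_coord_coprime[OF assms]] by blast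
  then have k: "k = k'"
    using t(3) t'(3) cong_less_imp_eq_int[of "int k" "int p" "int k'"] by simp
  have "vadd p (\<lambda>i. int k * u i) t = vadd p (\<lambda>i. int k * u i) t'"
    using eq by (simp add: k line_point_eq_vadd)
  then have "t = t'"
    using inj_onD[OF inj_on_vadd[OF prime_gt_0_nat[OF assms(1)]]] t(1) t'(1) by blast
  with k show "t = t' \<and> k = k'"
    by simp
qed

lemma line_point_surj:
  assumes "prime p" "u \<in> Fpn p n" "u j \<noteq> 0" "w \<in> Fpn p n"
  obtains t k where "t \<in> Fpn p n" "t j = 0" "k < p" "line_point p u t k = w"
proof -
  have p: "p > 0"
    using assms(1) prime_gt_0_nat by blast
  obtain a where a: "[u j * a = 1] (mod int p)"
    using cong_solve_coprime_int[OF Fpn_coord_coprime[OF assms(1-3)]] by blast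
  define k where "k = nat ((w j * a) mod int p)"
  define t where "t = (\<lambda>i. (w i - int k * u i) mod int p)"
  have k: "k < p" "int k = (w j * a) mod int p"
    using p by (simp_all add: k_def nat_less_iff)
  have "[int k * u j = w j * (u j * a)] (mod int p)"
    by (simp add: k cong_def mod_simps ac_simps)
  also have "[w j * (u j * a) = w j * 1] (mod int p)"
    using a by (rule cong_scalar_left)
  finally have "t j = 0"
    by (simp add: t_def cong_iff_dvd_diff dvd_diff_commute)
  moreover have "t \<in> Fpn p n"
    using assms(2,4) p by (auto simp: t_def Fpn_def)
  moreover have "line_point p u t k = w"
    using Fpn_coord_mod[OF assms(4) p] by (simp add: line_point_def t_def fun_eq_iff mod_simps)
  ultimately show ?thesis
    using k(1) that by blast
qed

lemma sum_Fpn_by_lines: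
  assumes "prime p" "u \<in> Fpn p n" "u j \<noteq> 0"
  shows "sum h (Fpn p n) = (\<Sum>t\<in>{t \<in> Fpn p n. t j = 0}. \<Sum>k<p. h (line_point p u t k))"
proof -
  let ?L = "{t \<in> Fpn p n. t j = 0} \<times> {..<p}"
  have "(\<lambda>(t, k). line_point p u t k) ` ?L = Fpn p n"
  proof
    show "(\<lambda>(t, k). line_point p u t k) ` ?L \<subseteq> Fpn p n"
      using line_point_in_Fpn[OF prime_gt_0_nat[OF assms(1)] assms(2)] by clarsimp
  next
    show "Fpn p n \<subseteq> (\<lambda>(t, k). line_point p u t k) ` ?L"
    proof
      fix w assume "w \<in> Fpn p n"
      then obtain t k where "t \<in> Fpn p n" "t j = 0" "k < p" "line_point p u t k = w"
        using line_point_surj[OF assms] by blast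
      then show "w \<in> (\<lambda>(t, k). line_point p u t k) ` ?L"
        by force
    qed
  qed
  then have "bij_betw (\<lambda>(t, k). line_point p u t k) ?L (Fpn p n)"
    using inj_on_line_point[OF assms] by (simp add: bij_betw_def)
  then have "sum h (Fpn p n) = (\<Sum>(t, k)\<in>?L. h (line_point p u t k))"
    by (simp add: sum.reindex_bij_betw[symmetric] case_prod_unfold)
  then show ?thesis
    by (simp add: sum.cartesian_product)
qed

lemma sum_arith_progression_residues_cong:
  "[(\<Sum>k<m. (a + int k * b) mod int m) = b * (\<Sum>k<m. int k)] (mod int m)"
proof -
  have "[(\<Sum>k<m. (a + int k * b) mod int m) = (\<Sum>k<m. a + int k * b)] (mod int m)"
    by (rule cong_sum) (simp add: cong_def)
  also have "(\<Sum>k<m. a + int k * b) = int m * a + b * (\<Sum>k<m. int k)"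
    by (simp add: sum.distrib sum_distrib_left mult.commute)
  also have "[int m * a + b * (\<Sum>k<m. int k) = b * (\<Sum>k<m. int k)] (mod int m)"
    by (simp add: cong_def)
  finally show ?thesis .
qed

lemma odd_dvd_sum_lessThan:
  assumes "odd m"
  shows "int m dvd (\<Sum>k<m. int k)"
proof -
  obtain q where m: "m = 2 * q + 1"
    using assms oddE by blast
  then have "{..<m} = {0..2 * q}"
    by auto
  then have "2 * (\<Sum>k<m. int k) = 2 * (int q * int m)"
    using double_gauss_sum[of "2 * q", where 'a = int] m by (simp add: algebra_simps)
  then show ?thesis
    by simp
qed

lemma Stab_sum_eq:
  assumes "prime p" "u \<in> Stab p n x" "u j \<noteq> 0"
  shows "(\<Sum>v\<in>Fpn p n. x v) = int p * (\<Sum>t\<in>{t \<in> Fpn p n. t j = 0}. x t)"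
proof -
  have p: "p > 0" and u: "u \<in> Fpn p n"
    using assms(1,2) prime_gt_0_nat by (auto simp: Stab_def)
  have "(\<Sum>v\<in>Fpn p n. x v) = (\<Sum>t\<in>{t \<in> Fpn p n. t j = 0}. \<Sum>k<p. x (line_point p u t k))"
    by (rule sum_Fpn_by_lines[OF assms(1) u assms(3)])
  also have "\<dots> = (\<Sum>t\<in>{t \<in> Fpn p n. t j = 0}. \<Sum>k<p. x t)"
    using Stab_line_point[OF p assms(2)] by simp
  finally show ?thesis
    by (simp add: sum_distrib_left)
qed

lemma Stab_weighted_sum_cong:
  assumes "prime p" "u \<in> Stab p n x" "u j \<noteq> 0"
  shows "[(\<Sum>v\<in>Fpn p n. x v * v i)
          = (\<Sum>t\<in>{t \<in> Fpn p n. t j = 0}. x t) * (\<Sum>k<p. int k) * u i] (mod int p)"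
proof -
  let ?T = "{t \<in> Fpn p n. t j = 0}"
  let ?K = "\<Sum>k<p. int k"
  have p: "p > 0" and u: "u \<in> Fpn p n"
    using assms(1,2) prime_gt_0_nat by (auto simp: Stab_def)
  have "(\<Sum>v\<in>Fpn p n. x v * v i) = (\<Sum>t\<in>?T. \<Sum>k<p. x (line_point p u t k) * line_point p u t k i)"
    by (rule sum_Fpn_by_lines[OF assms(1) u assms(3)])
  also have "\<dots> = (\<Sum>t\<in>?T. x t * (\<Sum>k<p. (t i + int k * u i) mod int p))"
    using Stab_line_point[OF p assms(2)] by (simp add: line_point_def sum_distrib_left)
  also have "[\<dots> = (\<Sum>t\<in>?T. x t * (u i * ?K))] (mod int p)"
    by (intro cong_sum cong_scalar_left sum_arith_progression_residues_cong)
  also have "(\<Sum>t\<in>?T. x t * (u i * ?K)) = (\<Sum>t\<in>?T. x t) * ?K * u i"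
    by (simp only: sum_distrib_right) (simp add: ac_simps)
  finally show ?thesis .
qed

lemma wsum_eq_vzero_if_Stab_nontrivial:
  assumes "prime p" and "odd p \<or> (4::int) dvd (\<Sum>v\<in>Fpn p n. x v)"
    and "u \<in> Stab p n x" "u \<noteq> vzero"
  shows "wsum p n x = vzero"
proof -
  obtain j where uj: "u j \<noteq> 0"
    using assms(4) by (auto simp: vzero_def)
  let ?X = "\<Sum>t\<in>{t \<in> Fpn p n. t j = 0}. x t"
  have "int p dvd ?X * (\<Sum>k<p. int k)"
  proof (cases "odd p")
    case True
    show ?thesis
      using odd_dvd_sum_lessThan[OF True] by (rule dvd_mult)
  next
    case False
    then have "\<not> p > 2"
      using prime_odd_nat[OF assms(1)] by blast
    then have p: "p = 2"
      using prime_ge_2_nat[OF assms(1)] by simp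
    then have "(4::int) dvd 2 * ?X"
      using assms(2) Stab_sum_eq[OF assms(1,3) uj] False by simp
    then have "2 dvd ?X"
      by presburger
    then show ?thesis
      using p by simp
  qed
  then show ?thesis
    using Stab_weighted_sum_cong[OF assms(1,3) uj]
    by (auto simp: wsum_def vzero_def cong_def)
qed

theorem lemma14p2:
  fixes p n :: nat and x :: "(nat \<Rightarrow> int) \<Rightarrow> int"
  assumes "prime p"
  shows "((odd p \<or> (4::int) dvd (\<Sum>v\<in>Fpn p n. x v)) \<longrightarrow> Stab p n x \<noteq> {vzero} \<longrightarrow> wsum p n x = vzero) \<and>
         ((\<Sum>v\<in>Fpn p n. x v) = 0 \<longrightarrow> wsum p n x \<noteq> vzero \<longrightarrow> Stab p n x = {vzero})"
proof -
  have vzero: "vzero \<in> Stab p n x"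
    using vzero_in_Stab assms prime_gt_0_nat by blast
  have nontrivial: "wsum p n x = vzero"
    if parity: "odd p \<or> (4::int) dvd (\<Sum>v\<in>Fpn p n. x v)" and "Stab p n x \<noteq> {vzero}"
  proof -
    obtain u where "u \<in> Stab p n x" "u \<noteq> vzero"
      using \<open>Stab p n x \<noteq> {vzero}\<close> vzero by blast
    then show ?thesis
      using wsum_eq_vzero_if_Stab_nontrivial[OF assms parity] by blast
  qed
  show ?thesis
  proof (intro conjI impI)
    show "Stab p n x = {vzero}" if "(\<Sum>v\<in>Fpn p n. x v) = 0" "wsum p n x \<noteq> vzero"
      using nontrivial that by (simp, blast)
  qed (rule nontrivial)
qed

end
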